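(* Let $n$ be such that $n/2$ is odd, let $\Omega\subseteq\mathbb{R}^n$ be open, let $v$ be a scalar-valued function on $\Omega$, let $\lambda\in\mathbb{C}\setminus\{0\}$, and let $\underline{f}$ be a vector-valued solution of the Clifford Riccati equation $\partial_{\underline{x}}\underline{f}+\underline{f}^2=v$. Then any scalar-valued solution $\phi$ of the Schrödinger equation $(-\Delta_n-v)\phi=\lambda^2\phi$ can be uniquely represented as $\phi=g+h$, where $g$ and $h$ are $\mathbb{C}_n$-valued solutions of \[\left(\partial_{\underline{x}}-M^{\underline{f}+\lambda ie_N}\right)g=0\quad\text{and}\quad\left(\partial_{\underline{x}}-M^{\underline{f}-\lambda ie_N}\right)h=0\] respectively.
   Context: $\mathbb{R}_{0,n}$ is the real Clifford algebra generated by an orthonormal basis $e_1,\dots,e_n$ of $\mathbb{R}^n$ with relations $e_je_k+e_ke_j=-2\delta_{jk}$; $\mathbb{C}_n=\mathbb{R}_{0,n}\otimes\mathbb{C}$, with $i$ the complex unit. $e_N=e_1e_2\cdots e_n$ is the pseudo-scalar. The Dirac operator is $\partial_{\underline{x}}=\sum_{j=1}^n e_j\partial_{x_j}$, acting from the left; $\Delta_n=-\partial_{\underline{x}}^2$ is the Laplacian. For a function $F$, $M^F$ is right multiplication: $M^Fg=gF$. *)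

theory Defs
  imports "HOL-Analysis.Analysis"
begin

text \<open>Complexified Clifford algebra C_n = R_{0,n} (x) C, with generators e_j indexed by
  a finite linearly ordered type 'n (so n = CARD('n)). An element is a vector of complex
  coefficients indexed by blades A (subsets of 'n), A standing for e_{a1}...e_{ak}, a1<...<ak.\<close>

type_synonym 'n cliff = "complex ^ ('n set)"

text \<open>Sign of e_A e_B = sign * e_{A symdiff B}, using e_j e_k = - e_k e_j (j \<noteq> k), e_j^2 = -1.\<close>
definition blade_sign :: "('n::{finite,linorder}) set \<Rightarrow> 'n set \<Rightarrow> complex" where
  "blade_sign A B = (-1) ^ (card {(a, b). a \<in> A \<and> b \<in> B \<and> b < a} + card (A \<inter> B))"

definition cmul :: "('n::{finite,linorder}) cliff \<Rightarrow> 'n cliff \<Rightarrow> 'n cliff" (infixl "\<odot>" 70) where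
  "u \<odot> w = (\<chi> C. \<Sum>A\<in>UNIV. blade_sign A ((A - C) \<union> (C - A)) * (u $ A) * (w $ ((A - C) \<union> (C - A))))"

definition gen :: "'n::{finite,linorder} \<Rightarrow> 'n cliff" where
  "gen j = (\<chi> A. if A = {j} then 1 else 0)"

definition eN :: "('n::{finite,linorder}) cliff" where
  "eN = (\<chi> A. if A = UNIV then 1 else 0)"

definition scal :: "complex \<Rightarrow> ('n::{finite,linorder}) cliff" where
  "scal c = (\<chi> A. if A = {} then c else 0)"

definition is_vector :: "('n::{finite,linorder}) cliff \<Rightarrow> bool" where
  "is_vector u \<longleftrightarrow> (\<forall>A. card A \<noteq> 1 \<longrightarrow> u $ A = 0)"

definition pd :: "'n::finite \<Rightarrow> (real ^ 'n \<Rightarrow> 'b::real_normed_vector) \<Rightarrow> real ^ 'n \<Rightarrow> 'b" where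
  "pd j F x = frechet_derivative F (at x) (axis j 1)"

definition dirac :: "((real, 'a::{finite,linorder}) vec \<Rightarrow> 'a cliff) \<Rightarrow> (real, 'a) vec \<Rightarrow> 'a cliff" where
  "dirac F x = (\<Sum>j\<in>UNIV. gen j \<odot> pd j F x)"

definition laplacian :: "(real ^ 'n \<Rightarrow> complex) \<Rightarrow> real ^ ('n::finite) \<Rightarrow> complex" where
  "laplacian F x = (\<Sum>j\<in>UNIV. pd j (pd j F) x)"

end

theory Submission
  imports Defs
begin

text \<open>
  Put \<open>\<mu> = \<lambda> i e\<^sub>N\<close>. When \<open>n\<close> is even, \<open>e\<^sub>N\<close> anticommutes with vectors, in particular with
  \<open>f\<close>; when moreover \<open>n/2\<close> is odd, \<open>e\<^sub>N\<^sup>2 = -1\<close> and hence \<open>\<mu>\<^sup>2 = \<lambda>\<^sup>2 \<noteq> 0\<close>. If \<open>\<phi> = g + h\<close> with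
  \<open>\<partial>g = g(f + \<mu>)\<close> and \<open>\<partial>h = h(f - \<mu>)\<close>, then \<open>X = \<partial>\<phi> - \<phi> f = (g - h)\<mu>\<close>, so
  \<open>g = (\<phi> + X\<mu>\<^sup>-\<^sup>1)/2\<close> and \<open>h = (\<phi> - X\<mu>\<^sup>-\<^sup>1)/2\<close> are determined by \<open>\<phi>\<close>. Conversely these formulas
  define solutions: since \<open>\<partial>\<^sup>2 = -\<Delta>\<close> on scalar functions (symmetry of second partial
  derivatives), the Riccati and Schr\<ouml>dinger equations give \<open>\<partial>X = \<lambda>\<^sup>2\<phi> - X f\<close>, and with
  \<open>\<mu>\<^sup>2 = \<lambda>\<^sup>2\<close> and \<open>f\<mu> = -\<mu>f\<close> this is exactly \<open>\<partial>g = g(f + \<mu>)\<close>.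
\<close>

section \<open>Clifford algebra\<close>

lemma sym_diff_cancel_left [simp]: "sym_diff A (sym_diff A B) = B"
  by auto

text \<open>Counting the pairs \<open>b \<le> a\<close> at once makes the sign multiplicative in each argument
  with respect to symmetric difference, which is what associativity of \<open>\<odot>\<close> rests on.\<close>

lemma blade_sign_eq_prod:
  "blade_sign A B = (\<Prod>a\<in>UNIV. \<Prod>b\<in>UNIV. if a \<in> A \<and> b \<in> B \<and> b \<le> a then -1 else 1)"
proof -
  let ?S = "{(a, b). a \<in> A \<and> b \<in> B \<and> b < a}"
  let ?T = "{(a, b). a \<in> A \<and> b \<in> B \<and> b \<le> a}"
  let ?D = "(\<lambda>a. (a, a)) ` (A \<inter> B)"
  have "?T = ?S \<union> ?D" and "?S \<inter> ?D = {}"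
    by (auto simp: order_le_less)
  moreover have "card ?D = card (A \<inter> B)"
    by (rule card_image) (auto simp: inj_on_def)
  ultimately have card_T: "card ?T = card ?S + card (A \<inter> B)"
    by (simp add: card_Un_disjoint)
  have "(\<Prod>a\<in>UNIV. \<Prod>b\<in>UNIV. if a \<in> A \<and> b \<in> B \<and> b \<le> a then -1 else 1)
      = (\<Prod>p\<in>UNIV. if p \<in> ?T then (-1::complex) else 1)"
    unfolding prod.cartesian_product by (intro prod.cong refl) (auto split: prod.splits)
  also have "\<dots> = (-1) ^ card ?T"
    by (simp add: prod.If_cases Int_def)
  finally show ?thesis
    unfolding blade_sign_def card_T by simp
qed

lemma blade_sign_sym_diff_left: "blade_sign (sym_diff A B) C = blade_sign A C * blade_sign B C"
  unfolding blade_sign_eq_prod prod.distrib[symmetric] by (intro prod.cong refl) auto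

lemma blade_sign_sym_diff_right: "blade_sign A (sym_diff B C) = blade_sign A B * blade_sign A C"
  unfolding blade_sign_eq_prod prod.distrib[symmetric] by (intro prod.cong refl) auto

lemma blade_sign_square: "blade_sign A B * blade_sign A B = 1"
  unfolding blade_sign_eq_prod prod.distrib[symmetric] by (intro prod.neutral ballI) auto

lemma blade_sign_empty [simp]: "blade_sign {} B = 1" "blade_sign A {} = 1"
  by (simp_all add: blade_sign_def)

lemma sum_UNIV_eq_single:
  fixes F :: "'a::finite \<Rightarrow> 'b::comm_monoid_add"
  assumes "\<And>A. A \<noteq> B \<Longrightarrow> F A = 0"
  shows "(\<Sum>A\<in>UNIV. F A) = F B"
  using sum.mono_neutral_cong_left[of UNIV "{B}" F F] assms by auto

lemma cmul_nth:
  "(u \<odot> w) $ C = (\<Sum>A\<in>UNIV. blade_sign A (sym_diff A C) * u $ A * w $ sym_diff A C)"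
  by (simp add: cmul_def)

lemma cmul_assoc: "(u \<odot> w) \<odot> z = u \<odot> (w \<odot> z)"
proof -
  have sign: "blade_sign (sym_diff B C) E * blade_sign B C = blade_sign B (sym_diff C E) * blade_sign C E"
    for B C E :: "'a set"
    by (simp only: blade_sign_sym_diff_left blade_sign_sym_diff_right) (simp add: algebra_simps)
  have "((u \<odot> w) \<odot> z) $ E = (u \<odot> (w \<odot> z)) $ E" for E
  proof -
    have "((u \<odot> w) \<odot> z) $ E = (\<Sum>B\<in>UNIV. \<Sum>A\<in>UNIV.
        blade_sign A (sym_diff A E) * blade_sign B (sym_diff B A) * u$B * w$(sym_diff B A) * z$(sym_diff A E))"
      unfolding cmul_nth by (subst sum.swap) (simp add: sum_distrib_left sum_distrib_right algebra_simps)
    also have "\<dots> = (\<Sum>B\<in>UNIV. \<Sum>C\<in>UNIV. blade_sign (sym_diff B C) (sym_diff (sym_diff B C) E)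
        * blade_sign B C * u$B * w$C * z$(sym_diff (sym_diff B C) E))"
      apply (rule sum.cong[OF refl])
      subgoal for B by (rule sum.reindex_bij_witness[of _ "sym_diff B" "sym_diff B"]) auto
      done
    also have "\<dots> = (\<Sum>B\<in>UNIV. \<Sum>C\<in>UNIV. blade_sign B (sym_diff B E)
        * blade_sign C (sym_diff C (sym_diff B E)) * u$B * w$C * z$(sym_diff C (sym_diff B E)))"
    proof (intro sum.cong refl)
      fix B C :: "'a set"
      have "sym_diff (sym_diff B C) E = sym_diff C (sym_diff B E)" by auto
      then show "blade_sign (sym_diff B C) (sym_diff (sym_diff B C) E) * blade_sign B C * u$B * w$C
            * z$(sym_diff (sym_diff B C) E)
          = blade_sign B (sym_diff B E) * blade_sign C (sym_diff C (sym_diff B E)) * u$B * w$C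
            * z$(sym_diff C (sym_diff B E))"
        using sign[of B C "sym_diff C (sym_diff B E)"] by simp
    qed
    also have "\<dots> = (u \<odot> (w \<odot> z)) $ E"
      unfolding cmul_nth sum_distrib_left by (simp add: algebra_simps)
    finally show ?thesis .
  qed
  then show ?thesis by (simp add: vec_eq_iff)
qed

lemma bounded_bilinear_cmul: "bounded_bilinear ((\<odot>) :: 'n::{finite,linorder} cliff \<Rightarrow> _)"
  unfolding bilinear_conv_bounded_bilinear[symmetric] bilinear_def linear_iff
  by (simp add: vec_eq_iff cmul_nth sum.distrib[symmetric] scaleR_sum_right algebra_simps)

interpretation cmul: bounded_bilinear "(\<odot>) :: 'n::{finite,linorder} cliff \<Rightarrow> _"
  by (rule bounded_bilinear_cmul)

lemma bounded_linear_scal: "bounded_linear (scal :: complex \<Rightarrow> 'n::{finite,linorder} cliff)"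
  unfolding linear_conv_bounded_linear[symmetric] linear_iff by (simp add: vec_eq_iff scal_def)

lemma scal_cmul: "scal c \<odot> u = (\<chi> A. c * u $ A)"
proof -
  have "(scal c \<odot> u) $ C = c * u $ C" for C
    unfolding cmul_nth scal_def by (subst sum_UNIV_eq_single[where B="{}"]) auto
  then show ?thesis by (simp add: vec_eq_iff)
qed

lemma cmul_scal: "u \<odot> scal c = (\<chi> A. u $ A * c)"
proof -
  have "(u \<odot> scal c) $ C = u $ C * c" for C
    unfolding cmul_nth scal_def by (subst sum_UNIV_eq_single[where B=C]) auto
  then show ?thesis by (simp add: vec_eq_iff)
qed

lemma scal_commute: "scal c \<odot> u = u \<odot> scal c"
  by (simp add: scal_cmul cmul_scal mult.commute)

lemma scal_mult: "scal a \<odot> scal b = scal (a * b)"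
  unfolding scal_cmul by (simp add: vec_eq_iff scal_def)

lemma scal_zero [simp]: "scal 0 = 0"
  and scal_add: "scal (a + b) = scal a + scal b"
  and scal_diff: "scal (a - b) = scal a - scal b"
  by (simp_all add: vec_eq_iff scal_def)

lemma cmul_scal_one [simp]: "u \<odot> scal 1 = u"
  by (simp add: vec_eq_iff cmul_scal)

lemma cmul_scal_left_commute: "u \<odot> (scal c \<odot> w) = scal c \<odot> (u \<odot> w)"
  by (metis cmul_assoc scal_commute)

lemma gen_cmul_gen: "gen j \<odot> gen k = (\<chi> C. if C = sym_diff {j} {k} then blade_sign {j} {k} else 0)"
proof -
  have "sym_diff {j} C = {k} \<longleftrightarrow> C = sym_diff {j} {k}" for C by auto
  then show ?thesis
    by (simp add: vec_eq_iff cmul_nth gen_def sum_UNIV_eq_single[where B="{j}"])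
qed

lemma blade_sign_singletons: "blade_sign {j} {k} = (if k \<le> j then -1 else 1)"
proof -
  have sets: "{(a, b). a \<in> {j} \<and> b \<in> {k} \<and> b < a} = (if k < j then {(j, k)} else {})"
    "{j} \<inter> {k} = (if j = k then {j} else {})"
    by auto
  show ?thesis
    unfolding blade_sign_def sets by (cases j k rule: linorder_cases) auto
qed

lemma gen_anticommute: "gen j \<odot> gen k + gen k \<odot> gen j = scal (if j = k then -2 else 0)"
proof -
  have "sym_diff {j} {k} = sym_diff {k} {j}" by auto
  then show ?thesis
    by (cases j k rule: linorder_cases) (auto simp: gen_cmul_gen vec_eq_iff scal_def blade_sign_singletons)
qed

lemma sum_gen_cmul_sum_gen_symmetric:
  fixes b :: "'n::{finite,linorder} \<Rightarrow> 'n \<Rightarrow> complex"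
  assumes "\<And>k j. b k j = b j k"
  shows "(\<Sum>k\<in>UNIV. gen k \<odot> (\<Sum>j\<in>UNIV. gen j \<odot> scal (b k j))) = scal (- (\<Sum>k\<in>UNIV. b k k))"
proof -
  define S where "S = (\<Sum>k\<in>UNIV. \<Sum>j\<in>UNIV. (gen k \<odot> gen j) \<odot> scal (b k j))"
  have "S + S = S + (\<Sum>k\<in>UNIV. \<Sum>j\<in>UNIV. (gen j \<odot> gen k) \<odot> scal (b k j))"
    unfolding S_def by (subst (2) sum.swap) (simp add: assms)
  also have "\<dots> = (\<Sum>k\<in>UNIV. \<Sum>j\<in>UNIV. (gen k \<odot> gen j + gen j \<odot> gen k) \<odot> scal (b k j))"
    by (simp only: S_def sum.distrib[symmetric] cmul.add_left)
  also have "\<dots> = (\<Sum>k\<in>UNIV. scal (-2 * b k k))"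
    by (simp add: gen_anticommute scal_mult if_distrib[of "\<lambda>z. scal (z * _)"] cong: if_cong)
  also have "\<dots> = scal (- (\<Sum>k\<in>UNIV. b k k)) + scal (- (\<Sum>k\<in>UNIV. b k k))"
    by (simp add: vec_eq_iff scal_def sum_negf sum_distrib_left)
  finally have "(2::real) *\<^sub>R S = (2::real) *\<^sub>R scal (- (\<Sum>k\<in>UNIV. b k k))"
    by (simp only: scaleR_2)
  then show ?thesis
    by (simp add: S_def cmul.sum_right cmul_assoc)
qed

lemma cmul_right_square_cancel:
  assumes "\<mu> \<odot> \<mu> = scal c" and "c \<noteq> 0" and "D \<odot> \<mu> = 0"
  shows "D = 0"
proof -
  have "D = D \<odot> ((\<mu> \<odot> \<mu>) \<odot> scal (inverse c))"
    using assms(1,2) by (simp add: scal_mult)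
  also have "\<dots> = 0"
    by (simp add: cmul_assoc[symmetric] assms(3) cmul.zero_left)
  finally show ?thesis .
qed

lemma factor_identity:
  assumes "\<mu> \<odot> \<mu> = scal c" and "c \<noteq> 0" and "F \<odot> \<mu> = - (\<mu> \<odot> F)" and "X = P - scal p \<odot> F"
  shows "P + (scal (c * p) - X \<odot> F) \<odot> (scal (inverse c) \<odot> \<mu>)
    = (scal p + X \<odot> (scal (inverse c) \<odot> \<mu>)) \<odot> (F + \<mu>)"
proof -
  let ?\<nu> = "scal (inverse c) \<odot> \<mu>"
  have inverse: "?\<nu> \<odot> \<mu> = scal 1"
    using assms(1,2) by (simp add: cmul_assoc scal_mult)
  have anticommute: "?\<nu> \<odot> F = - (F \<odot> ?\<nu>)"
    by (simp add: cmul_assoc cmul_scal_left_commute assms(3) cmul.minus_right)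
  have "c * p * inverse c = p"
    using assms(2) by (simp add: field_simps)
  then have scaled: "scal (c * p) \<odot> ?\<nu> = scal p \<odot> \<mu>"
    by (simp only: cmul_assoc[symmetric] scal_mult)
  have "(scal p + X \<odot> ?\<nu>) \<odot> (F + \<mu>) = scal p \<odot> F + scal p \<odot> \<mu> + X \<odot> (?\<nu> \<odot> F) + X \<odot> (?\<nu> \<odot> \<mu>)"
    by (simp add: cmul.add_left cmul.add_right cmul_assoc)
  also have "\<dots> = (X + scal p \<odot> F) + (scal (c * p) \<odot> ?\<nu> - X \<odot> F \<odot> ?\<nu>)"
    unfolding inverse anticommute scaled by (simp add: cmul.minus_right cmul_assoc)
  also have "\<dots> = P + (scal (c * p) - X \<odot> F) \<odot> ?\<nu>"
    using assms(4) by (simp add: cmul.diff_left)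
  finally show ?thesis ..
qed

section \<open>The pseudoscalar\<close>

lemma cmul_eN_nth: "(u \<odot> eN) $ C = blade_sign (- C) UNIV * u $ (- C)"
proof -
  have "sym_diff A C = UNIV \<longleftrightarrow> A = - C" for A by auto
  then show ?thesis
    unfolding cmul_nth eN_def by (subst sum_UNIV_eq_single[where B="- C"]) auto
qed

lemma eN_cmul_nth: "(eN \<odot> u) $ C = blade_sign UNIV (- C) * u $ (- C)"
proof -
  have "sym_diff UNIV C = - C" by auto
  then show ?thesis
    unfolding cmul_nth eN_def by (subst sum_UNIV_eq_single[where B=UNIV]) auto
qed

lemma eN_square: "(eN :: 'n::{finite,linorder} cliff) \<odot> eN = scal (blade_sign (UNIV :: 'n set) UNIV)"
proof -
  have "(eN \<odot> (eN :: 'n cliff)) $ C = scal (blade_sign (UNIV :: 'n set) UNIV) $ C" for C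
    unfolding cmul_eN_nth by (auto simp: eN_def scal_def)
  then show ?thesis by (simp add: vec_eq_iff)
qed

lemma card_less_pairs: "2 * card {(a, b). b < (a::'n::{finite,linorder})} + CARD('n) = CARD('n) ^ 2"
proof -
  let ?P = "{(a, b). (b::'n) < a}"
  let ?Q = "prod.swap ` ?P"
  let ?D = "(\<lambda>a. (a, a)) ` (UNIV :: 'n set)"
  have "(UNIV :: ('n \<times> 'n) set) = ?P \<union> ?Q \<union> ?D"
    by (auto simp: image_iff)
  then have "CARD('n \<times> 'n) = card (?P \<union> ?Q \<union> ?D)"
    by simp
  also have "\<dots> = card ?P + card ?Q + card ?D"
    by (subst card_Un_disjoint, simp, simp, fastforce)+ simp
  moreover have "card ?Q = card ?P" and "card ?D = CARD('n)"
    by (auto intro!: card_image simp: inj_on_def)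
  ultimately show ?thesis
    by (simp add: card_prod power2_eq_square)
qed

lemma blade_sign_UNIV_UNIV:
  assumes "even CARD('n)" and "odd (CARD('n) div 2)"
  shows "blade_sign (UNIV :: 'n::{finite,linorder} set) UNIV = -1"
proof -
  obtain m where m: "CARD('n) = 2 * m" and "odd m"
    using assms by auto
  let ?K = "card {(a, b). b < (a::'n)}"
  have "2 * ?K + 2 * m = (2 * m) ^ 2"
    using card_less_pairs[where 'n='n] m by simp
  then have "?K + m = 2 * (m * m)"
    by (simp add: power2_eq_square)
  with \<open>odd m\<close> have "odd (?K + CARD('n))"
    by (metis m even_add even_mult_iff)
  then show ?thesis
    by (simp add: blade_sign_def)
qed

lemma blade_sign_singleton_UNIV:
  assumes "even CARD('n)"
  shows "blade_sign {j :: 'n::{finite,linorder}} UNIV * blade_sign UNIV {j} = -1"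
proof -
  have "{(a, b). a \<in> {j} \<and> b \<in> UNIV \<and> b < a} = Pair j ` {b. b < j}"
    and "{(a, b). a \<in> UNIV \<and> b \<in> {j} \<and> b < a} = (\<lambda>a. (a, j)) ` {a. j < a}"
    by auto
  then have cards: "card {(a, b). a \<in> {j} \<and> b \<in> UNIV \<and> b < a} = card {b. b < j}"
    "card {(a, b). a \<in> UNIV \<and> b \<in> {j} \<and> b < a} = card {a. j < a}"
    by (simp_all add: card_image inj_on_def)
  have "(UNIV :: 'n set) = {b. b < j} \<union> {a. j < a} \<union> {j}"
    by auto
  then have "CARD('n) = card ({b. b < j} \<union> {a. j < a} \<union> {j})"
    by simp
  also have "\<dots> = card {b. b < j} + card {a. j < a} + 1"
    by (subst card_Un_disjoint, simp, simp, fastforce)+ simp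
  finally have "CARD('n) = card {b. b < j} + card {a. j < a} + 1" .
  with assms have "odd ((card {b. b < j} + 1) + (card {a. j < a} + 1))"
    by simp
  then show ?thesis
    unfolding blade_sign_def cards by (simp add: power_add[symmetric])
qed

lemma vector_cmul_eN:
  assumes "even CARD('n)" and "is_vector (u :: 'n::{finite,linorder} cliff)"
  shows "u \<odot> eN = - (eN \<odot> u)"
proof -
  have "(u \<odot> eN) $ C = - ((eN \<odot> u) $ C)" for C
  proof (cases "card (- C) = 1")
    case True
    then obtain j where j: "- C = {j}"
      by (auto simp: card_Suc_eq)
    have "blade_sign {j} UNIV = blade_sign {j} UNIV * (blade_sign UNIV {j} * blade_sign UNIV {j})"
      by (simp add: blade_sign_square)
    also have "\<dots> = - blade_sign UNIV {j}"
      using blade_sign_singleton_UNIV[OF assms(1), of j] by (simp add: mult.assoc[symmetric])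
    finally show ?thesis
      by (simp add: cmul_eN_nth eN_cmul_nth j)
  next
    case False
    then show ?thesis
      using assms(2) by (simp add: cmul_eN_nth eN_cmul_nth is_vector_def)
  qed
  then show ?thesis
    by (simp add: vec_eq_iff)
qed

lemma scal_cmul_eN_square:
  assumes "even CARD('n)" and "odd (CARD('n) div 2)"
  shows "(scal c \<odot> (eN :: 'n::{finite,linorder} cliff)) \<odot> (scal c \<odot> eN) = scal (- c\<^sup>2)"
proof -
  have "(scal c \<odot> eN) \<odot> (scal c \<odot> eN) = scal c \<odot> (scal c \<odot> (eN \<odot> (eN :: 'n cliff)))"
    by (simp only: cmul_assoc cmul_scal_left_commute[of eN])
  then show ?thesis
    using eN_square[where 'n='n] blade_sign_UNIV_UNIV[OF assms]
    by (simp add: scal_mult power2_eq_square)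
qed

lemma vector_anticommute_scal_cmul_eN:
  assumes "even CARD('n)" and "is_vector (u :: 'n::{finite,linorder} cliff)"
  shows "u \<odot> (scal c \<odot> eN) = - ((scal c \<odot> eN) \<odot> u)"
  using vector_cmul_eN[OF assms]
  by (simp only: cmul_scal_left_commute[of u] cmul_assoc cmul.minus_right)

section \<open>Symmetry of second partial derivatives\<close>

lemma pd_eq_has_derivative: "(F has_derivative F') (at x) \<Longrightarrow> pd j F x = F' (axis j 1)"
  unfolding pd_def by (simp add: frechet_derivative_at[symmetric])

lemma pd_cong_open:
  assumes "open \<Omega>" and "x \<in> \<Omega>" and "\<And>y. y \<in> \<Omega> \<Longrightarrow> F y = H y"
  shows "pd j F x = pd j H x"
proof -
  have "(F has_derivative F') (at x) \<longleftrightarrow> (H has_derivative F') (at x)" for F'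
    using assms by (metis has_derivative_transform_within_open)
  then show ?thesis
    unfolding pd_def frechet_derivative_def by simp
qed

lemma has_vector_derivative_along_axis:
  assumes "\<phi> differentiable at (y + s *\<^sub>R axis j 1)"
  shows "((\<lambda>s. \<phi> (y + s *\<^sub>R axis j 1)) has_vector_derivative pd j \<phi> (y + s *\<^sub>R axis j 1)) (at s)"
proof -
  let ?D = "frechet_derivative \<phi> (at (y + s *\<^sub>R axis j 1))"
  have "((\<lambda>s. y + s *\<^sub>R axis j 1) has_derivative (\<lambda>h. h *\<^sub>R axis j 1)) (at s)"
    by (auto intro!: derivative_eq_intros)
  moreover have "(\<phi> has_derivative ?D) (at (y + s *\<^sub>R axis j 1))"
    using assms frechet_derivative_works by blast
  ultimately have "((\<lambda>s. \<phi> (y + s *\<^sub>R axis j 1)) has_derivative (\<lambda>h. ?D (h *\<^sub>R axis j 1))) (at s)"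
    by (rule has_derivative_compose)
  then show ?thesis
    unfolding has_vector_derivative_def pd_def
    by (simp add: linear_cmul[OF linear_frechet_derivative[OF assms]])
qed

lemma norm_diff_le_vector_derivative_bound:
  fixes f :: "real \<Rightarrow> 'a::real_normed_vector"
  assumes "a \<le> b"
    and "\<And>s. s \<in> {a..b} \<Longrightarrow> (f has_vector_derivative f' s) (at s)"
    and "\<And>s. s \<in> {a..b} \<Longrightarrow> norm (f' s) \<le> B"
  shows "norm (f b - f a) \<le> B * (b - a)"
proof -
  have "norm (f b - f a) \<le> B * norm (b - a)"
  proof (rule differentiable_bound[of "{a..b}"])
    show "(f has_derivative (\<lambda>h. h *\<^sub>R f' s)) (at s within {a..b})" if "s \<in> {a..b}" for s
      using assms(2)[OF that] by (simp add: has_vector_derivative_def has_derivative_at_withinI)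
    show "onorm (\<lambda>h. h *\<^sub>R f' s) \<le> B" if "s \<in> {a..b}" for s
      using assms(3)[OF that] by (simp add: onorm_scaleR_left onorm_id)
  qed (use assms(1) in auto)
  then show ?thesis
    using assms(1) by simp
qed

lemma has_derivative_two_point_bound:
  assumes "(\<psi> has_derivative L) (at x)" and "\<epsilon> > 0"
  obtains d where "d > 0"
    and "\<And>y z. norm (y - x) < d \<Longrightarrow> norm (z - x) < d \<Longrightarrow>
           norm (\<psi> y - \<psi> z - L (y - z)) \<le> \<epsilon> * (norm (y - x) + norm (z - x))"
proof -
  obtain d where "d > 0"
    and d: "\<And>y. norm (y - x) < d \<Longrightarrow> norm (\<psi> y - \<psi> x - L (y - x)) \<le> \<epsilon> * norm (y - x)"
    using assms unfolding has_derivative_at_alt by blast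
  have "linear L"
    using assms(1) has_derivative_linear by blast
  have "norm (\<psi> y - \<psi> z - L (y - z)) \<le> \<epsilon> * (norm (y - x) + norm (z - x))"
    if "norm (y - x) < d" and "norm (z - x) < d" for y z
  proof -
    have "\<psi> y - \<psi> z - L (y - z) = (\<psi> y - \<psi> x - L (y - x)) - (\<psi> z - \<psi> x - L (z - x))"
      using linear_diff[OF \<open>linear L\<close>, of "y - x" "z - x"] by (simp add: algebra_simps)
    then have "norm (\<psi> y - \<psi> z - L (y - z))
        \<le> norm (\<psi> y - \<psi> x - L (y - x)) + norm (\<psi> z - \<psi> x - L (z - x))"
      by (metis norm_triangle_ineq4)
    then show ?thesis
      using d[OF that(1)] d[OF that(2)] by (simp add: algebra_simps)
  qed
  with \<open>d > 0\<close> show ?thesis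
    using that by blast
qed

lemma second_difference_bound:
  fixes \<phi> :: "(real, 'n::finite) vec \<Rightarrow> 'b::real_normed_vector"
  assumes "0 \<le> t"
    and "\<And>s. s \<in> {0..t} \<Longrightarrow> \<phi> differentiable at (y + s *\<^sub>R axis j 1) \<and> \<phi> differentiable at (x + s *\<^sub>R axis j 1)"
    and "\<And>s. s \<in> {0..t} \<Longrightarrow> norm (pd j \<phi> (y + s *\<^sub>R axis j 1) - pd j \<phi> (x + s *\<^sub>R axis j 1) - c) \<le> B"
  shows "norm (\<phi> (y + t *\<^sub>R axis j 1) - \<phi> (x + t *\<^sub>R axis j 1) - \<phi> y + \<phi> x - t *\<^sub>R c) \<le> B * t"
proof -
  define G where "G s = \<phi> (y + s *\<^sub>R axis j 1) - \<phi> (x + s *\<^sub>R axis j 1) - s *\<^sub>R c" for s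
  have "(G has_vector_derivative pd j \<phi> (y + s *\<^sub>R axis j 1) - pd j \<phi> (x + s *\<^sub>R axis j 1) - c) (at s)"
    if "s \<in> {0..t}" for s
    unfolding G_def using assms(2)[OF that]
    by (auto intro!: derivative_eq_intros has_vector_derivative_along_axis)
  then have "norm (G t - G 0) \<le> B * (t - 0)"
    using assms(1,3) by (intro norm_diff_le_vector_derivative_bound) auto
  then show ?thesis
    by (simp add: G_def algebra_simps)
qed

lemma second_difference_estimate:
  fixes \<phi> :: "(real, 'n::finite) vec \<Rightarrow> 'b::real_normed_vector"
  assumes "open \<Omega>" and "x \<in> \<Omega>" and "\<And>y. y \<in> \<Omega> \<Longrightarrow> \<phi> differentiable at y"
    and "pd j \<phi> differentiable at x" and "\<epsilon> > 0"
  obtains \<delta> where "\<delta> > 0"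
    and "\<And>t. 0 < t \<Longrightarrow> t < \<delta> \<Longrightarrow>
      norm (\<phi> (x + t *\<^sub>R axis k 1 + t *\<^sub>R axis j 1) - \<phi> (x + t *\<^sub>R axis j 1) - \<phi> (x + t *\<^sub>R axis k 1) + \<phi> x
            - (t * t) *\<^sub>R pd k (pd j \<phi>) x) \<le> \<epsilon> * (t * t)"
proof -
  let ?u = "axis j 1 :: (real, 'n) vec" and ?w = "axis k 1 :: (real, 'n) vec"
  let ?L = "frechet_derivative (pd j \<phi>) (at x)"
  obtain r where "r > 0" and r: "ball x r \<subseteq> \<Omega>"
    using assms(1,2) open_contains_ball by blast
  have L: "(pd j \<phi> has_derivative ?L) (at x)"
    using assms(4) frechet_derivative_works by blast
  obtain d where "d > 0" and d: "\<And>y z. norm (y - x) < d \<Longrightarrow> norm (z - x) < d \<Longrightarrow>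
      norm (pd j \<phi> y - pd j \<phi> z - ?L (y - z)) \<le> \<epsilon> / 3 * (norm (y - x) + norm (z - x))"
    using has_derivative_two_point_bound[OF L, of "\<epsilon> / 3"] assms(5) by auto
  have Lw: "?L ?w = pd k (pd j \<phi>) x"
    by (simp add: pd_def)
  have bound: "norm (\<phi> (x + t *\<^sub>R ?w + t *\<^sub>R ?u) - \<phi> (x + t *\<^sub>R ?u) - \<phi> (x + t *\<^sub>R ?w) + \<phi> x
      - t *\<^sub>R (t *\<^sub>R ?L ?w)) \<le> \<epsilon> * t * t"
    if t: "0 < t" "t < min r d / 2" for t
  proof (rule second_difference_bound)
    fix s assume s: "s \<in> {0..t}"
    have near: "norm (x + t *\<^sub>R ?w + s *\<^sub>R ?u - x) \<le> 2 * t" "norm (x + s *\<^sub>R ?u - x) \<le> t"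
      using s norm_triangle_ineq[of "t *\<^sub>R ?w" "s *\<^sub>R ?u"] by auto
    then have "x + t *\<^sub>R ?w + s *\<^sub>R ?u \<in> \<Omega>" "x + s *\<^sub>R ?u \<in> \<Omega>"
      using t r by (auto simp: dist_norm norm_minus_commute subset_iff)
    then show "\<phi> differentiable at (x + t *\<^sub>R ?w + s *\<^sub>R ?u) \<and> \<phi> differentiable at (x + s *\<^sub>R ?u)"
      using assms(3) by blast
    have "?L (x + t *\<^sub>R ?w + s *\<^sub>R ?u - (x + s *\<^sub>R ?u)) = t *\<^sub>R ?L ?w"
      using linear_cmul[OF linear_frechet_derivative[OF assms(4)]] by simp
    then have "norm (pd j \<phi> (x + t *\<^sub>R ?w + s *\<^sub>R ?u) - pd j \<phi> (x + s *\<^sub>R ?u) - t *\<^sub>R ?L ?w)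
        \<le> \<epsilon> / 3 * (norm (x + t *\<^sub>R ?w + s *\<^sub>R ?u - x) + norm (x + s *\<^sub>R ?u - x))"
      using d[of "x + t *\<^sub>R ?w + s *\<^sub>R ?u" "x + s *\<^sub>R ?u"] near t by simp
    also have "\<dots> \<le> \<epsilon> / 3 * (2 * t + t)"
      using near assms(5) by (intro mult_left_mono add_mono) auto
    finally show "norm (pd j \<phi> (x + t *\<^sub>R ?w + s *\<^sub>R ?u) - pd j \<phi> (x + s *\<^sub>R ?u) - t *\<^sub>R ?L ?w) \<le> \<epsilon> * t"
      by simp
  qed (use t in simp)
  show ?thesis
    by (rule that[of "min r d / 2"]) (use \<open>r > 0\<close> \<open>d > 0\<close> bound in \<open>simp_all add: Lw algebra_simps\<close>)
qed

text \<open>Both mixed partials are limits of the same second difference divided by \<open>t\<^sup>2\<close>.\<close>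

lemma pd_commute:
  fixes \<phi> :: "(real, 'n::finite) vec \<Rightarrow> 'b::real_normed_vector"
  assumes "open \<Omega>" and "x \<in> \<Omega>" and "\<And>y. y \<in> \<Omega> \<Longrightarrow> \<phi> differentiable at y"
    and "pd j \<phi> differentiable at x" and "pd k \<phi> differentiable at x"
  shows "pd k (pd j \<phi>) x = pd j (pd k \<phi>) x"
proof (rule ccontr)
  let ?a = "pd k (pd j \<phi>) x" and ?b = "pd j (pd k \<phi>) x"
  assume "?a \<noteq> ?b"
  define \<epsilon> where "\<epsilon> = norm (?a - ?b) / 4"
  have "\<epsilon> > 0"
    using \<open>?a \<noteq> ?b\<close> by (simp add: \<epsilon>_def)
  define \<Delta> where "\<Delta> t = \<phi> (x + t *\<^sub>R axis k 1 + t *\<^sub>R axis j 1) - \<phi> (x + t *\<^sub>R axis j 1)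
    - \<phi> (x + t *\<^sub>R axis k 1) + \<phi> x" for t
  have \<Delta>_swap: "\<Delta> t = \<phi> (x + t *\<^sub>R axis j 1 + t *\<^sub>R axis k 1) - \<phi> (x + t *\<^sub>R axis k 1)
    - \<phi> (x + t *\<^sub>R axis j 1) + \<phi> x" for t
    by (simp add: \<Delta>_def algebra_simps)
  obtain \<delta>1 where "\<delta>1 > 0"
    and \<delta>1: "\<And>t. 0 < t \<Longrightarrow> t < \<delta>1 \<Longrightarrow> norm (\<Delta> t - (t * t) *\<^sub>R ?a) \<le> \<epsilon> * (t * t)"
    using second_difference_estimate[OF assms(1-4) \<open>\<epsilon> > 0\<close>, of k] unfolding \<Delta>_def by blast
  obtain \<delta>2 where "\<delta>2 > 0"
    and \<delta>2: "\<And>t. 0 < t \<Longrightarrow> t < \<delta>2 \<Longrightarrow> norm (\<Delta> t - (t * t) *\<^sub>R ?b) \<le> \<epsilon> * (t * t)"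
    using second_difference_estimate[OF assms(1-3,5) \<open>\<epsilon> > 0\<close>, of j] unfolding \<Delta>_swap by blast
  define t where "t = min \<delta>1 \<delta>2 / 2"
  have t: "0 < t" "t < \<delta>1" "t < \<delta>2"
    using \<open>\<delta>1 > 0\<close> \<open>\<delta>2 > 0\<close> by (auto simp: t_def)
  have "(\<Delta> t - (t * t) *\<^sub>R ?b) - (\<Delta> t - (t * t) *\<^sub>R ?a) = (t * t) *\<^sub>R (?a - ?b)"
    by (simp add: algebra_simps)
  then have "(t * t) * norm (?a - ?b) = norm ((\<Delta> t - (t * t) *\<^sub>R ?b) - (\<Delta> t - (t * t) *\<^sub>R ?a))"
    using t by simp
  also have "\<dots> \<le> 2 * \<epsilon> * (t * t)"
    using norm_triangle_ineq4[of "\<Delta> t - (t * t) *\<^sub>R ?b" "\<Delta> t - (t * t) *\<^sub>R ?a"]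
      \<delta>1[OF t(1,2)] \<delta>2[OF t(1,3)] by linarith
  also have "\<dots> = (t * t) * (norm (?a - ?b) / 2)"
    by (simp add: \<epsilon>_def)
  finally have "norm (?a - ?b) \<le> norm (?a - ?b) / 2"
    using t by (simp add: mult_le_cancel_left_pos)
  with \<open>?a \<noteq> ?b\<close> show False
    by simp
qed

section \<open>The Dirac operator\<close>

text \<open>This is \<open>\<partial>\<phi>\<close> for scalar \<open>\<phi>\<close> (see \<open>dirac_scal\<close>), written through the partial derivatives
  of \<open>\<phi>\<close> so that its differentiability is a condition on the second partials only.\<close>

definition cliff_grad :: "((real, 'n::{finite,linorder}) vec \<Rightarrow> complex) \<Rightarrow> (real, 'n) vec \<Rightarrow> 'n cliff" where
  "cliff_grad \<phi> y = (\<Sum>j\<in>UNIV. gen j \<odot> scal (pd j \<phi> y))"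

lemma has_derivative_scal:
  "(\<phi> has_derivative \<phi>') F \<Longrightarrow> ((\<lambda>y. scal (\<phi> y)) has_derivative (\<lambda>h. scal (\<phi>' h))) F"
  by (rule bounded_linear.has_derivative[OF bounded_linear_scal])

lemma differentiable_scal: "\<phi> differentiable F \<Longrightarrow> (\<lambda>y. scal (\<phi> y)) differentiable F"
  unfolding differentiable_def using has_derivative_scal by blast

lemma differentiable_cmul:
  "G differentiable at x \<Longrightarrow> H differentiable at x \<Longrightarrow> (\<lambda>y. G y \<odot> H y) differentiable at x"
  unfolding differentiable_def by (blast intro: cmul.FDERIV)

lemma has_derivative_cliff_grad:
  assumes "\<And>j. (pd j \<phi> has_derivative D j) (at x)"
  shows "(cliff_grad \<phi> has_derivative (\<lambda>h. \<Sum>j\<in>UNIV. gen j \<odot> scal (D j h))) (at x)"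
proof -
  have "((\<lambda>y. gen j \<odot> scal (pd j \<phi> y)) has_derivative (\<lambda>h. gen j \<odot> scal (D j h))) (at x)" for j
    by (rule bounded_linear.has_derivative[OF cmul.bounded_linear_right has_derivative_scal[OF assms]])
  then show ?thesis
    unfolding cliff_grad_def[abs_def] by (rule has_derivative_sum)
qed

lemma differentiable_cliff_grad:
  assumes "\<And>j. pd j \<phi> differentiable at x"
  shows "cliff_grad \<phi> differentiable at x"
proof -
  have "(pd j \<phi> has_derivative frechet_derivative (pd j \<phi>) (at x)) (at x)" for j
    using assms frechet_derivative_works by blast
  then show ?thesis
    by (rule differentiableI[OF has_derivative_cliff_grad])
qed

lemma dirac_eq_has_derivative:
  "(F has_derivative F') (at x) \<Longrightarrow> dirac F x = (\<Sum>j\<in>UNIV. gen j \<odot> F' (axis j 1))"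
  unfolding dirac_def by (simp add: pd_eq_has_derivative)

lemma dirac_cong_open:
  assumes "open \<Omega>" and "x \<in> \<Omega>" and "\<And>y. y \<in> \<Omega> \<Longrightarrow> F y = H y"
  shows "dirac F x = dirac H x"
proof -
  have "pd j F x = pd j H x" for j
    using assms by (rule pd_cong_open)
  then show ?thesis
    by (simp add: dirac_def)
qed

lemma dirac_add:
  assumes "F differentiable at x" and "H differentiable at x"
  shows "dirac (\<lambda>y. F y + H y) x = dirac F x + dirac H x"
proof -
  obtain F' H' where F': "(F has_derivative F') (at x)" and H': "(H has_derivative H') (at x)"
    using assms unfolding differentiable_def by blast
  show ?thesis
    unfolding dirac_eq_has_derivative[OF has_derivative_add[OF F' H']]
      dirac_eq_has_derivative[OF F'] dirac_eq_has_derivative[OF H']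
    by (simp add: cmul.add_right sum.distrib)
qed

lemma dirac_diff:
  assumes "F differentiable at x" and "H differentiable at x"
  shows "dirac (\<lambda>y. F y - H y) x = dirac F x - dirac H x"
proof -
  obtain F' H' where F': "(F has_derivative F') (at x)" and H': "(H has_derivative H') (at x)"
    using assms unfolding differentiable_def by blast
  show ?thesis
    unfolding dirac_eq_has_derivative[OF has_derivative_diff[OF F' H']]
      dirac_eq_has_derivative[OF F'] dirac_eq_has_derivative[OF H']
    by (simp add: cmul.diff_right sum_subtractf)
qed

lemma dirac_cmul_const:
  assumes "F differentiable at x"
  shows "dirac (\<lambda>y. F y \<odot> c) x = dirac F x \<odot> c"
proof -
  obtain F' where "(F has_derivative F') (at x)"
    using assms unfolding differentiable_def by blast
  then have "((\<lambda>y. F y \<odot> c) has_derivative (\<lambda>h. F' h \<odot> c)) (at x)"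
    by (rule bounded_linear.has_derivative[OF cmul.bounded_linear_left])
  with \<open>(F has_derivative F') (at x)\<close> show ?thesis
    by (simp add: dirac_eq_has_derivative[of F F'] dirac_eq_has_derivative[of "\<lambda>y. F y \<odot> c"]
        cmul.sum_left cmul_assoc)
qed

lemma dirac_scal:
  assumes "\<phi> differentiable at x"
  shows "dirac (\<lambda>y. scal (\<phi> y)) x = cliff_grad \<phi> x"
proof -
  obtain \<phi>' where \<phi>': "(\<phi> has_derivative \<phi>') (at x)"
    using assms unfolding differentiable_def by blast
  show ?thesis
    unfolding dirac_eq_has_derivative[OF has_derivative_scal[OF \<phi>']] cliff_grad_def
      pd_eq_has_derivative[OF \<phi>'] ..
qed

lemma dirac_scal_cmul:
  assumes "\<phi> differentiable at x" and "F differentiable at x"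
  shows "dirac (\<lambda>y. scal (\<phi> y) \<odot> F y) x = cliff_grad \<phi> x \<odot> F x + scal (\<phi> x) \<odot> dirac F x"
proof -
  obtain \<phi>' F' where \<phi>': "(\<phi> has_derivative \<phi>') (at x)" and F': "(F has_derivative F') (at x)"
    using assms unfolding differentiable_def by blast
  have "((\<lambda>y. scal (\<phi> y) \<odot> F y) has_derivative (\<lambda>h. scal (\<phi> x) \<odot> F' h + scal (\<phi>' h) \<odot> F x)) (at x)"
    by (rule cmul.FDERIV[OF has_derivative_scal[OF \<phi>'] F'])
  note product = dirac_eq_has_derivative[OF this]
  show ?thesis
    unfolding product dirac_eq_has_derivative[OF F']
    by (simp add: cliff_grad_def pd_eq_has_derivative[OF \<phi>'] cmul.add_right
        sum.distrib cmul.sum_left cmul.sum_right cmul_assoc cmul_scal_left_commute add.commute)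
qed

lemma dirac_cliff_grad:
  assumes "open \<Omega>" and "x \<in> \<Omega>" and "\<And>y. y \<in> \<Omega> \<Longrightarrow> \<phi> differentiable at y"
    and "\<And>j. pd j \<phi> differentiable at x"
  shows "dirac (cliff_grad \<phi>) x = scal (- laplacian \<phi> x)"
proof -
  have "(pd j \<phi> has_derivative frechet_derivative (pd j \<phi>) (at x)) (at x)" for j
    using assms(4) frechet_derivative_works by blast
  note second = this pd_eq_has_derivative[OF this]
  have "pd k (pd j \<phi>) x = pd j (pd k \<phi>) x" for j k
    by (rule pd_commute[OF assms(1-3) assms(4) assms(4)])
  then have "(\<Sum>k\<in>UNIV. gen k \<odot> (\<Sum>j\<in>UNIV. gen j \<odot> scal (pd k (pd j \<phi>) x)))
      = scal (- laplacian \<phi> x)"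
    unfolding laplacian_def by (rule sum_gen_cmul_sum_gen_symmetric)
  then show ?thesis
    by (simp add: dirac_eq_has_derivative[OF has_derivative_cliff_grad[OF second(1)]] second(2))
qed

section \<open>Splitting along the Riccati equation\<close>

lemma dirac_riccati_transform:
  assumes "open \<Omega>" and "x \<in> \<Omega>" and "\<And>y. y \<in> \<Omega> \<Longrightarrow> \<phi> differentiable at y"
    and "\<And>j. pd j \<phi> differentiable at x" and "f differentiable at x"
    and riccati: "dirac f x + f x \<odot> f x = scal v"
    and schroedinger: "- laplacian \<phi> x - v * \<phi> x = c * \<phi> x"
  shows "dirac (\<lambda>y. cliff_grad \<phi> y - scal (\<phi> y) \<odot> f y) x
    = scal (c * \<phi> x) - (cliff_grad \<phi> x - scal (\<phi> x) \<odot> f x) \<odot> f x"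
proof -
  have "dirac f x = scal v - f x \<odot> f x"
    using riccati by (simp add: eq_diff_eq)
  then have "dirac (\<lambda>y. cliff_grad \<phi> y - scal (\<phi> y) \<odot> f y) x
      = scal (- laplacian \<phi> x) - (cliff_grad \<phi> x \<odot> f x + scal (\<phi> x) \<odot> (scal v - f x \<odot> f x))"
    using assms(1-5)
    by (simp add: dirac_diff differentiable_cliff_grad differentiable_cmul differentiable_scal
        dirac_cliff_grad dirac_scal_cmul)
  also have "\<dots> = scal (- laplacian \<phi> x - v * \<phi> x) - (cliff_grad \<phi> x - scal (\<phi> x) \<odot> f x) \<odot> f x"
    by (simp add: cmul.diff_right cmul.diff_left scal_diff scal_mult cmul_assoc algebra_simps)
  finally show ?thesis
    unfolding schroedinger .
qed

text \<open>\<open>g = (\<phi> + (\<partial>\<phi> - \<phi> f) \<mu>\<^sup>-\<^sup>1)/2\<close>, where \<open>scal (inverse c) \<odot> \<mu>\<close> is \<open>\<mu>\<^sup>-\<^sup>1\<close> when \<open>\<mu>\<^sup>2 = c\<close>.\<close>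

definition riccati_component ::
  "((real, 'n::{finite,linorder}) vec \<Rightarrow> complex) \<Rightarrow> ((real, 'n) vec \<Rightarrow> 'n cliff) \<Rightarrow> complex
    \<Rightarrow> 'n cliff \<Rightarrow> (real, 'n) vec \<Rightarrow> 'n cliff" where
  "riccati_component \<phi> f c \<mu> y =
    (scal (\<phi> y) + (cliff_grad \<phi> y - scal (\<phi> y) \<odot> f y) \<odot> (scal (inverse c) \<odot> \<mu>)) \<odot> scal (1 / 2)"

lemma riccati_component_add_neg: "riccati_component \<phi> f c \<mu> y + riccati_component \<phi> f c (- \<mu>) y = scal (\<phi> y)"
proof -
  have "riccati_component \<phi> f c \<mu> y + riccati_component \<phi> f c (- \<mu>) y
      = (scal (\<phi> y) + scal (\<phi> y)) \<odot> scal (1 / 2)"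
    unfolding riccati_component_def by (simp add: cmul.minus_right flip: cmul.add_left)
  also have "\<dots> = scal (\<phi> y)"
    by (simp only: scal_add[symmetric] scal_mult) simp
  finally show ?thesis .
qed

lemma riccati_component_solves:
  assumes "open \<Omega>" and "x \<in> \<Omega>" and "\<And>y. y \<in> \<Omega> \<Longrightarrow> \<phi> differentiable at y"
    and "\<And>j. pd j \<phi> differentiable at x" and "f differentiable at x"
    and "dirac f x + f x \<odot> f x = scal v" and "- laplacian \<phi> x - v * \<phi> x = c * \<phi> x"
    and "\<mu> \<odot> \<mu> = scal c" and "c \<noteq> 0" and "f x \<odot> \<mu> = - (\<mu> \<odot> f x)"
  shows "riccati_component \<phi> f c \<mu> differentiable at x"
    and "dirac (riccati_component \<phi> f c \<mu>) x = riccati_component \<phi> f c \<mu> x \<odot> (f x + \<mu>)"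
proof -
  let ?\<nu> = "scal (inverse c) \<odot> \<mu>"
  let ?X = "\<lambda>y. cliff_grad \<phi> y - scal (\<phi> y) \<odot> f y"
  have X: "?X differentiable at x"
    using assms(2-5) by (simp add: differentiable_cliff_grad differentiable_cmul differentiable_scal)
  have \<phi>: "(\<lambda>y. scal (\<phi> y)) differentiable at x"
    using assms(2,3) by (simp add: differentiable_scal)
  have X\<nu>: "(\<lambda>y. ?X y \<odot> ?\<nu>) differentiable at x"
    using X by (simp add: differentiable_cmul)
  have sum: "(\<lambda>y. scal (\<phi> y) + ?X y \<odot> ?\<nu>) differentiable at x"
    using \<phi> X\<nu> by (rule differentiable_add)
  then show "riccati_component \<phi> f c \<mu> differentiable at x"
    unfolding riccati_component_def[abs_def] by (simp add: differentiable_cmul)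
  have "dirac (riccati_component \<phi> f c \<mu>) x = dirac (\<lambda>y. scal (\<phi> y) + ?X y \<odot> ?\<nu>) x \<odot> scal (1 / 2)"
    unfolding riccati_component_def[abs_def] using sum by (rule dirac_cmul_const)
  also have "\<dots> = (cliff_grad \<phi> x + (scal (c * \<phi> x) - ?X x \<odot> f x) \<odot> ?\<nu>) \<odot> scal (1 / 2)"
    unfolding dirac_add[OF \<phi> X\<nu>] dirac_scal[OF assms(3)[OF assms(2)]] dirac_cmul_const[OF X]
    using dirac_riccati_transform[OF assms(1-7)] by simp
  also have "\<dots> = riccati_component \<phi> f c \<mu> x \<odot> (f x + \<mu>)"
    unfolding riccati_component_def factor_identity[OF assms(8-10) refl]
    by (simp add: cmul_assoc scal_commute)
  finally show "dirac (riccati_component \<phi> f c \<mu>) x = riccati_component \<phi> f c \<mu> x \<odot> (f x + \<mu>)" .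
qed

lemma splitting_unique_at:
  assumes "open \<Omega>" and "x \<in> \<Omega>" and "\<mu> \<odot> \<mu> = scal c" and "c \<noteq> 0"
    and split: "\<And>y. y \<in> \<Omega> \<Longrightarrow> g1 y + h1 y = g2 y + h2 y"
    and "g1 differentiable at x" and "h1 differentiable at x"
    and "g2 differentiable at x" and "h2 differentiable at x"
    and "dirac g1 x = g1 x \<odot> (F + \<mu>)" and "dirac h1 x = h1 x \<odot> (F - \<mu>)"
    and "dirac g2 x = g2 x \<odot> (F + \<mu>)" and "dirac h2 x = h2 x \<odot> (F - \<mu>)"
  shows "g1 x = g2 x \<and> h1 x = h2 x"
proof -
  define D where "D = g1 x - g2 x"
  have h: "h1 x - h2 x = - D"
    using split[OF assms(2)] by (simp add: D_def algebra_simps)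
  have "dirac (\<lambda>y. g1 y + h1 y) x = dirac (\<lambda>y. g2 y + h2 y) x"
    using assms(1,2) split by (rule dirac_cong_open)
  then have "dirac g1 x + dirac h1 x = dirac g2 x + dirac h2 x"
    unfolding dirac_add[OF assms(6,7)] dirac_add[OF assms(8,9)] .
  then have "D \<odot> (F + \<mu>) + (h1 x - h2 x) \<odot> (F - \<mu>) = 0"
    unfolding D_def using assms(10-13) by (simp add: cmul.diff_left algebra_simps)
  then have "(2::real) *\<^sub>R (D \<odot> \<mu>) = 0"
    unfolding h by (simp add: cmul.add_right cmul.diff_right cmul.minus_left scaleR_2)
  then have "D = 0"
    using cmul_right_square_cancel[OF assms(3,4)] by simp
  with h show ?thesis
    by (simp add: D_def)
qed

definition riccati_splitting ::
  "(real, 'n::{finite,linorder}) vec set \<Rightarrow> ((real, 'n) vec \<Rightarrow> complex) \<Rightarrow> ((real, 'n) vec \<Rightarrow> 'n cliff)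
    \<Rightarrow> 'n cliff \<Rightarrow> ((real, 'n) vec \<Rightarrow> 'n cliff) \<Rightarrow> ((real, 'n) vec \<Rightarrow> 'n cliff) \<Rightarrow> bool" where
  "riccati_splitting \<Omega> \<phi> f \<mu> g h \<longleftrightarrow>
    (\<forall>x\<in>\<Omega>. g differentiable at x \<and> h differentiable at x \<and> scal (\<phi> x) = g x + h x
      \<and> dirac g x - g x \<odot> (f x + \<mu>) = 0 \<and> dirac h x - h x \<odot> (f x - \<mu>) = 0)"

lemma riccati_splitting_exists:
  assumes "open \<Omega>"
    and "\<forall>x\<in>\<Omega>. \<phi> differentiable at x \<and> (\<forall>j. pd j \<phi> differentiable at x)"
    and "\<forall>x\<in>\<Omega>. f differentiable at x"
    and "\<forall>x\<in>\<Omega>. dirac f x + f x \<odot> f x = scal (v x)"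
    and "\<forall>x\<in>\<Omega>. - laplacian \<phi> x - v x * \<phi> x = c * \<phi> x"
    and "\<mu> \<odot> \<mu> = scal c" and "c \<noteq> 0" and "\<forall>x\<in>\<Omega>. f x \<odot> \<mu> = - (\<mu> \<odot> f x)"
  shows "riccati_splitting \<Omega> \<phi> f \<mu> (riccati_component \<phi> f c \<mu>) (riccati_component \<phi> f c (- \<mu>))"
proof -
  have \<phi>: "\<phi> differentiable at y" if "y \<in> \<Omega>" for y
    using assms(2) that by blast
  have solves: "riccati_component \<phi> f c \<nu> differentiable at x
      \<and> dirac (riccati_component \<phi> f c \<nu>) x = riccati_component \<phi> f c \<nu> x \<odot> (f x + \<nu>)"
    if "x \<in> \<Omega>" and "\<nu> \<odot> \<nu> = scal c" and "f x \<odot> \<nu> = - (\<nu> \<odot> f x)" for x \<nu>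
    using riccati_component_solves[OF assms(1) that(1) \<phi> _ assms(3-5)[rule_format, OF that(1)]
        that(2) assms(7) that(3)] assms(2) that(1) by blast
  have "- \<mu> \<odot> - \<mu> = scal c" and "f x \<odot> - \<mu> = - (- \<mu> \<odot> f x)" if "x \<in> \<Omega>" for x
    using assms(6,8) that by (simp_all add: cmul.minus_left cmul.minus_right)
  then show ?thesis
    unfolding riccati_splitting_def
    using solves assms(6,8) by (simp add: riccati_component_add_neg)
qed

lemma riccati_splitting_unique:
  assumes "open \<Omega>" and "\<mu> \<odot> \<mu> = scal c" and "c \<noteq> 0"
    and "riccati_splitting \<Omega> \<phi> f \<mu> g h" and "riccati_splitting \<Omega> \<phi> f \<mu> g' h'" and "x \<in> \<Omega>"
  shows "g x = g' x \<and> h x = h' x"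
  using assms(4-6) unfolding riccati_splitting_def
  by (intro splitting_unique_at[OF assms(1,6,2,3)]) auto

theorem corollary7p1:
  fixes \<Omega> :: "(real, 'n::{finite,linorder}) vec set"
    and v :: "(real, 'n) vec \<Rightarrow> complex"
    and lam :: complex
    and f :: "(real, 'n) vec \<Rightarrow> 'n cliff"
    and \<phi> :: "(real, 'n) vec \<Rightarrow> complex"
  assumes "even CARD('n)" and "odd (CARD('n) div 2)"
    and "open \<Omega>"
    and "lam \<noteq> 0"
    and "\<forall>x\<in>\<Omega>. is_vector (f x)"
    and "\<forall>x\<in>\<Omega>. f differentiable at x"
    and "\<forall>x\<in>\<Omega>. dirac f x + f x \<odot> f x = scal (v x)"
    and "\<forall>x\<in>\<Omega>. \<phi> differentiable at x \<and> (\<forall>j. pd j \<phi> differentiable at x)"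
    and "\<forall>x\<in>\<Omega>. - laplacian \<phi> x - v x * \<phi> x = lam\<^sup>2 * \<phi> x"
  shows "(\<exists>g h :: (real, 'n) vec \<Rightarrow> 'n cliff.
            (\<forall>x\<in>\<Omega>. g differentiable at x \<and> h differentiable at x
               \<and> scal (\<phi> x) = g x + h x
               \<and> dirac g x - g x \<odot> (f x + scal (lam * \<i>) \<odot> eN) = 0
               \<and> dirac h x - h x \<odot> (f x - scal (lam * \<i>) \<odot> eN) = 0))
       \<and> (\<forall>g h g' h' :: (real, 'n) vec \<Rightarrow> 'n cliff.
            (\<forall>x\<in>\<Omega>. g differentiable at x \<and> h differentiable at x
               \<and> scal (\<phi> x) = g x + h x
               \<and> dirac g x - g x \<odot> (f x + scal (lam * \<i>) \<odot> eN) = 0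
               \<and> dirac h x - h x \<odot> (f x - scal (lam * \<i>) \<odot> eN) = 0)
          \<and> (\<forall>x\<in>\<Omega>. g' differentiable at x \<and> h' differentiable at x
               \<and> scal (\<phi> x) = g' x + h' x
               \<and> dirac g' x - g' x \<odot> (f x + scal (lam * \<i>) \<odot> eN) = 0
               \<and> dirac h' x - h' x \<odot> (f x - scal (lam * \<i>) \<odot> eN) = 0)
          \<longrightarrow> (\<forall>x\<in>\<Omega>. g x = g' x \<and> h x = h' x))"
proof -
  define \<mu> :: "'n cliff" where "\<mu> = scal (lam * \<i>) \<odot> eN"
  have square: "\<mu> \<odot> \<mu> = scal (lam\<^sup>2)"
    using scal_cmul_eN_square[OF assms(1,2), of "lam * \<i>"] by (simp add: \<mu>_def power_mult_distrib)
  have "lam\<^sup>2 \<noteq> 0"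
    using assms(4) by simp
  have "riccati_splitting \<Omega> \<phi> f \<mu> (riccati_component \<phi> f (lam\<^sup>2) \<mu>) (riccati_component \<phi> f (lam\<^sup>2) (- \<mu>))"
    using assms(3,5-9) square \<open>lam\<^sup>2 \<noteq> 0\<close> vector_anticommute_scal_cmul_eN[OF assms(1)]
    by (intro riccati_splitting_exists) (auto simp: \<mu>_def)
  moreover have "\<forall>x\<in>\<Omega>. g x = g' x \<and> h x = h' x"
    if "riccati_splitting \<Omega> \<phi> f \<mu> g h \<and> riccati_splitting \<Omega> \<phi> f \<mu> g' h'" for g h g' h'
    using riccati_splitting_unique[OF assms(3) square \<open>lam\<^sup>2 \<noteq> 0\<close>] that by blast
  ultimately show ?thesis
    unfolding riccati_splitting_def \<mu>_def by blast
qed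

end
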